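(* Let $F\colon \mathbb{R}^{nm \times nm} \to \mathbb{R}$ be differentiable at $X = A \otimes B$, where $A \in \mathbb{R}^{n \times n}$ and $B \in \mathbb{R}^{m \times m}$ are nonzero matrices. Define $G\colon \mathbb{R}^{n \times n} \to \mathbb{R}$ by $G(A_1) = F(A_1 \otimes B)$. Then $G$ is differentiable at $A$ and \[ \nabla G(A) = \sum_{j=1}^{m} \left(I_n \otimes e_j^{T} B_L^{*}\right) \nabla F(X) \left(I_n \otimes B_R^{*} e_j\right) \] for any $B_L, B_R \in \mathbb{C}^{m \times m}$ with $B = B_L B_R$. Similarly, define $H\colon \mathbb{R}^{m \times m} \to \mathbb{R}$ by $H(B_1) = F(A \otimes B_1)$. Then $H$ is differentiable at $B$ and \[ \nabla H(B) = \sum_{i=1}^{n} \left(e_i^{T} A_L^{*} \otimes I_m\right) \nabla F(X) \left(A_R^{*} e_i \otimes I_m\right) \] for any $A_L, A_R \in \mathbb{C}^{n \times n}$ with $A = A_L A_R$.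
   Context: $\otimes$ denotes the Kronecker product, $e_j$ the $j$th standard unit vector of appropriate size, $I_n$ the $n\times n$ identity, and $(\cdot)^*$ the conjugate transpose. Gradients of real-valued functions of real matrices are taken with respect to the Frobenius inner product $\langle X, Y\rangle_F = \operatorname{trace}(X^T Y)$. *)

theory Defs
  imports "HOL-Analysis.Analysis"
begin

definition kron :: "'a::times ^ 'c ^ 'r \<Rightarrow> 'a ^ 'd ^ 's \<Rightarrow> 'a ^ ('c \<times> 'd) ^ ('r \<times> 's)" where
  "kron M N = (\<chi> p q. M $ fst p $ fst q * N $ snd p $ snd q)"

definition cnj_transpose :: "complex ^ 'c ^ 'r \<Rightarrow> complex ^ 'r ^ 'c" where
  "cnj_transpose M = (\<chi> i j. cnj (M $ j $ i))"

definition cmat :: "real ^ 'c ^ 'r \<Rightarrow> complex ^ 'c ^ 'r" where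
  "cmat M = (\<chi> i j. complex_of_real (M $ i $ j))"

text \<open>Gradient of a real-valued function w.r.t. the Frobenius inner product
  (the inner product of the type real^'c^'r is exactly the Frobenius one).\<close>
definition grad :: "('v::real_inner \<Rightarrow> real) \<Rightarrow> 'v \<Rightarrow> 'v" where
  "grad f x = (SOME g. (f has_derivative (\<lambda>h. g \<bullet> h)) (at x))"

definition drop_unit2 :: "'a ^ ('n \<times> 1) ^ ('n \<times> 1) \<Rightarrow> 'a ^ 'n ^ 'n" where
  "drop_unit2 M = (\<chi> i j. M $ (i, 1) $ (j, 1))"

definition drop_unit1 :: "'a ^ (1 \<times> 'm) ^ (1 \<times> 'm) \<Rightarrow> 'a ^ 'm ^ 'm" where
  "drop_unit1 M = (\<chi> i j. M $ (1, i) $ (1, j))"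

end

theory Submission
  imports Defs
begin

text \<open>Both \<open>A\<^sub>1 \<mapsto> A\<^sub>1 \<otimes> B\<close> and \<open>B\<^sub>1 \<mapsto> A \<otimes> B\<^sub>1\<close> are linear, so by the chain rule the
  gradient of \<open>F\<close> composed with either map is the adjoint of that map applied to \<open>\<nabla>F(X)\<close>.
  These adjoints contract \<open>\<nabla>F(X)\<close> against \<open>B\<close> in the second (resp. against \<open>A\<close> in the first)
  Kronecker factor. As \<open>B\<close> is real, \<open>B = conj (B\<^sub>L B\<^sub>R)\<close>; expanding
  \<open>B\<^sub>k\<^sub>l = \<Sum>\<^sub>j conj (B\<^sub>L)\<^sub>k\<^sub>j conj (B\<^sub>R)\<^sub>j\<^sub>l\<close> inside the contraction gives the sum over \<open>j\<close>
  in the statement, whose factors \<open>e\<^sub>j\<^sup>T B\<^sub>L\<^sup>*\<close> and \<open>B\<^sub>R\<^sup>* e\<^sub>j\<close> select the \<open>j\<close>-th column of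
  \<open>conj B\<^sub>L\<close> and the \<open>j\<close>-th row of \<open>conj B\<^sub>R\<close>.\<close>

lemma sum_UNIV_prod:
  "(\<Sum>p\<in>UNIV. f p) = (\<Sum>a\<in>UNIV. \<Sum>b\<in>UNIV. f (a, b))"
  by (simp add: sum.cartesian_product flip: UNIV_Times_UNIV)

lemma sum_reverse3:
  "(\<Sum>a\<in>A. \<Sum>b\<in>B. \<Sum>c\<in>C. f a b c) = (\<Sum>c\<in>C. \<Sum>b\<in>B. \<Sum>a\<in>A. f a b c)"
proof -
  have "(\<Sum>a\<in>A. \<Sum>b\<in>B. \<Sum>c\<in>C. f a b c) = (\<Sum>b\<in>B. \<Sum>a\<in>A. \<Sum>c\<in>C. f a b c)"
    by (rule sum.swap)
  also have "\<dots> = (\<Sum>b\<in>B. \<Sum>c\<in>C. \<Sum>a\<in>A. f a b c)"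
    by (rule sum.cong[OF refl], rule sum.swap)
  also have "\<dots> = (\<Sum>c\<in>C. \<Sum>b\<in>B. \<Sum>a\<in>A. f a b c)"
    by (rule sum.swap)
  finally show ?thesis .
qed

lemma grad_eqI:
  fixes f :: "'v::euclidean_space \<Rightarrow> real"
  assumes "(f has_derivative (\<lambda>h. g \<bullet> h)) (at x)"
  shows "grad f x = g"
proof -
  have "(f has_derivative (\<lambda>h. grad f x \<bullet> h)) (at x)"
    unfolding grad_def using assms by (rule someI)
  then have "(\<lambda>h. grad f x \<bullet> h) = (\<lambda>h. g \<bullet> h)"
    using assms by (rule has_derivative_unique)
  then show ?thesis
    by (metis vector_eq_rdot)
qed

lemma has_derivative_grad:
  fixes f :: "'v::euclidean_space \<Rightarrow> real"
  assumes "f differentiable (at x)"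
  shows "(f has_derivative (\<lambda>h. grad f x \<bullet> h)) (at x)"
proof -
  obtain D where D: "(f has_derivative D) (at x)"
    using assms by (auto simp: differentiable_def)
  then have "D = (\<lambda>h. adjoint D 1 \<bullet> h)"
    using adjoint_works[OF has_derivative_linear[OF D]] by (auto simp: inner_commute)
  with D show ?thesis
    using grad_eqI by metis
qed

lemma grad_comp_linear:
  fixes F :: "'w::euclidean_space \<Rightarrow> real" and L :: "'v::euclidean_space \<Rightarrow> 'w"
  assumes "linear L" and "F differentiable (at (L x))"
    and "\<And>h. grad F (L x) \<bullet> L h = g \<bullet> h"
  shows "(\<lambda>y. F (L y)) differentiable (at x) \<and> grad (\<lambda>y. F (L y)) x = g"
proof -
  have "((\<lambda>y. F (L y)) has_derivative (\<lambda>h. grad F (L x) \<bullet> L h)) (at x)"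
    using diff_chain_at[OF linear_imp_has_derivative[OF assms(1)] has_derivative_grad[OF assms(2)]]
    by (simp add: o_def)
  then have "((\<lambda>y. F (L y)) has_derivative (\<lambda>h. g \<bullet> h)) (at x)"
    by (simp add: assms(3))
  then show ?thesis
    by (auto intro: differentiableI grad_eqI)
qed

lemma linear_kron_left: "linear (\<lambda>X. kron X (B :: real ^ 'd ^ 's))"
  by (rule linearI) (auto simp: kron_def vec_eq_iff algebra_simps)

lemma linear_kron_right: "linear (\<lambda>X. kron (A :: real ^ 'c ^ 'r) X)"
  by (rule linearI) (auto simp: kron_def vec_eq_iff algebra_simps)

definition contract_snd ::
    "'a::comm_semiring_0 ^ ('n \<times> 'm) ^ ('n \<times> 'm) \<Rightarrow> 'a ^ 'm ^ 'm \<Rightarrow> 'a ^ 'n ^ 'n" where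
  "contract_snd M N = (\<chi> i j. \<Sum>k\<in>UNIV. \<Sum>l\<in>UNIV. M $ (i, k) $ (j, l) * N $ k $ l)"

definition contract_fst ::
    "'a::comm_semiring_0 ^ ('n \<times> 'm) ^ ('n \<times> 'm) \<Rightarrow> 'a ^ 'n ^ 'n \<Rightarrow> 'a ^ 'm ^ 'm" where
  "contract_fst M N = (\<chi> k l. \<Sum>i\<in>UNIV. \<Sum>j\<in>UNIV. M $ (i, k) $ (j, l) * N $ i $ j)"

lemma inner_kron_left:
  fixes G :: "real ^ ('n::finite \<times> 'm::finite) ^ ('n \<times> 'm)"
  shows "G \<bullet> kron H B = contract_snd G B \<bullet> H"
  unfolding inner_vec_def sum_UNIV_prod kron_def contract_snd_def
  by (simp add: sum_distrib_left sum_distrib_right mult_ac) (rule sum.cong[OF refl], rule sum.swap)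

lemma inner_kron_right:
  fixes G :: "real ^ ('n::finite \<times> 'm::finite) ^ ('n \<times> 'm)"
  shows "G \<bullet> kron A H = contract_fst G A \<bullet> H"
proof -
  have "G \<bullet> kron A H = (\<Sum>i\<in>UNIV. \<Sum>k\<in>UNIV. \<Sum>j\<in>UNIV. \<Sum>l\<in>UNIV. G $ (i, k) $ (j, l) * A $ i $ j * H $ k $ l)"
    unfolding inner_vec_def sum_UNIV_prod kron_def by (simp add: mult_ac)
  also have "\<dots> = (\<Sum>k\<in>UNIV. \<Sum>i\<in>UNIV. \<Sum>j\<in>UNIV. \<Sum>l\<in>UNIV. G $ (i, k) $ (j, l) * A $ i $ j * H $ k $ l)"
    by (rule sum.swap)
  also have "\<dots> = (\<Sum>k\<in>UNIV. \<Sum>i\<in>UNIV. \<Sum>l\<in>UNIV. \<Sum>j\<in>UNIV. G $ (i, k) $ (j, l) * A $ i $ j * H $ k $ l)"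
    by (intro sum.cong refl sum.swap)
  also have "\<dots> = (\<Sum>k\<in>UNIV. \<Sum>l\<in>UNIV. \<Sum>i\<in>UNIV. \<Sum>j\<in>UNIV. G $ (i, k) $ (j, l) * A $ i $ j * H $ k $ l)"
    by (intro sum.cong refl sum.swap)
  also have "\<dots> = contract_fst G A \<bullet> H"
    unfolding inner_vec_def contract_fst_def by (simp add: sum_distrib_right)
  finally show ?thesis .
qed

lemma cmat_contract_snd: "cmat (contract_snd G B) = contract_snd (cmat G) (cmat B)"
  by (simp add: cmat_def contract_snd_def vec_eq_iff)

lemma cmat_contract_fst: "cmat (contract_fst G A) = contract_fst (cmat G) (cmat A)"
  by (simp add: cmat_def contract_fst_def vec_eq_iff)

lemma cmat_entry_eq_cnj_product:
  assumes "cmat B = L ** R"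
  shows "cmat B $ k $ l = (\<Sum>j\<in>UNIV. cnj (L $ k $ j) * cnj (R $ j $ l))"
proof -
  have "cmat B $ k $ l = cnj (cmat B $ k $ l)"
    by (simp add: cmat_def)
  then show ?thesis
    by (simp add: assms matrix_matrix_mult_def)
qed

lemma rowvector_axis_mult_cnj_transpose:
  "((rowvector (axis j 1) :: complex ^ 'm ^ 1) ** cnj_transpose L) $ u $ k = cnj (L $ k $ j)"
  by (simp add: matrix_matrix_mult_def rowvector_def axis_def cnj_transpose_def
      flip: of_bool_def)

lemma cnj_transpose_mult_columnvector_axis:
  "(cnj_transpose R ** (columnvector (axis j 1) :: complex ^ 1 ^ 'm)) $ l $ u = cnj (R $ j $ l)"
  by (simp add: matrix_matrix_mult_def columnvector_def axis_def cnj_transpose_def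
      flip: of_bool_def)

lemma kron_mat1_mult_kron_mat1_entry:
  fixes X :: "'a::comm_ring_1 ^ 'm ^ 'u" and Y :: "'a ^ 'v ^ 'm"
    and M :: "'a ^ ('n::finite \<times> 'm::finite) ^ ('n \<times> 'm)"
  shows "(kron (mat 1 :: 'a ^ 'n ^ 'n) X ** M ** kron (mat 1 :: 'a ^ 'n ^ 'n) Y) $ (i, u) $ (i', v)
     = (\<Sum>l\<in>UNIV. (\<Sum>k\<in>UNIV. X $ u $ k * M $ (i, k) $ (i', l)) * Y $ l $ v)"
  by (simp add: matrix_matrix_mult_def sum_UNIV_prod kron_def mat_def if_distrib if_distribR
      sum.If_cases)

lemma kron_mult_mat1_kron_mat1_entry:
  fixes X :: "'a::comm_ring_1 ^ 'n ^ 'u" and Y :: "'a ^ 'v ^ 'n"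
    and M :: "'a ^ ('n::finite \<times> 'm::finite) ^ ('n \<times> 'm)"
  shows "(kron X (mat 1 :: 'a ^ 'm ^ 'm) ** M ** kron Y (mat 1 :: 'a ^ 'm ^ 'm)) $ (u, k) $ (v, l)
     = (\<Sum>j\<in>UNIV. (\<Sum>i\<in>UNIV. X $ u $ i * M $ (i, k) $ (j, l)) * Y $ j $ v)"
  by (simp add: matrix_matrix_mult_def sum_UNIV_prod kron_def mat_def if_distrib if_distribR
      sum.If_cases)

lemma drop_unit2_sum_kron_selectors:
  fixes M :: "complex ^ ('n::finite \<times> 'm::finite) ^ ('n \<times> 'm)"
  assumes "cmat B = L ** R"
  shows "drop_unit2 (\<Sum>j\<in>UNIV.
            kron (mat 1 :: complex ^ 'n ^ 'n)
                 ((rowvector (axis j 1) :: complex ^ 'm ^ 1) ** cnj_transpose L)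
            ** M
            ** kron (mat 1 :: complex ^ 'n ^ 'n)
                 (cnj_transpose R ** (columnvector (axis j 1) :: complex ^ 1 ^ 'm)))
       = contract_snd M (cmat B)" (is "drop_unit2 ?S = _")
proof -
  have "drop_unit2 ?S $ i $ i'
      = (\<Sum>j\<in>UNIV. \<Sum>l\<in>UNIV. (\<Sum>k\<in>UNIV. cnj (L $ k $ j) * M $ (i, k) $ (i', l)) * cnj (R $ j $ l))"
    for i i'
    by (simp only: drop_unit2_def vec_lambda_beta sum_component kron_mat1_mult_kron_mat1_entry
        rowvector_axis_mult_cnj_transpose cnj_transpose_mult_columnvector_axis)
  also have "\<dots> i i' = (\<Sum>j\<in>UNIV. \<Sum>l\<in>UNIV. \<Sum>k\<in>UNIV. M $ (i, k) $ (i', l) * (cnj (L $ k $ j) * cnj (R $ j $ l)))"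
    for i i'
    by (simp add: sum_distrib_left sum_distrib_right mult_ac)
  also have "\<dots> i i' = (\<Sum>k\<in>UNIV. \<Sum>l\<in>UNIV. \<Sum>j\<in>UNIV. M $ (i, k) $ (i', l) * (cnj (L $ k $ j) * cnj (R $ j $ l)))"
    for i i'
    by (rule sum_reverse3)
  also have "\<dots> i i' = contract_snd M (cmat B) $ i $ i'" for i i'
    by (simp add: contract_snd_def cmat_entry_eq_cnj_product[OF assms] sum_distrib_left)
  finally show ?thesis
    by (simp add: vec_eq_iff)
qed

lemma drop_unit1_sum_kron_selectors:
  fixes M :: "complex ^ ('n::finite \<times> 'm::finite) ^ ('n \<times> 'm)"
  assumes "cmat A = L ** R"
  shows "drop_unit1 (\<Sum>i\<in>UNIV.
            kron ((rowvector (axis i 1) :: complex ^ 'n ^ 1) ** cnj_transpose L)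
                 (mat 1 :: complex ^ 'm ^ 'm)
            ** M
            ** kron (cnj_transpose R ** (columnvector (axis i 1) :: complex ^ 1 ^ 'n))
                 (mat 1 :: complex ^ 'm ^ 'm))
       = contract_fst M (cmat A)" (is "drop_unit1 ?S = _")
proof -
  have "drop_unit1 ?S $ k $ l
      = (\<Sum>i\<in>UNIV. \<Sum>b\<in>UNIV. (\<Sum>a\<in>UNIV. cnj (L $ a $ i) * M $ (a, k) $ (b, l)) * cnj (R $ i $ b))"
    for k l
    by (simp only: drop_unit1_def vec_lambda_beta sum_component kron_mult_mat1_kron_mat1_entry
        rowvector_axis_mult_cnj_transpose cnj_transpose_mult_columnvector_axis)
  also have "\<dots> k l = (\<Sum>i\<in>UNIV. \<Sum>b\<in>UNIV. \<Sum>a\<in>UNIV. M $ (a, k) $ (b, l) * (cnj (L $ a $ i) * cnj (R $ i $ b)))"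
    for k l
    by (simp add: sum_distrib_left sum_distrib_right mult_ac)
  also have "\<dots> k l = (\<Sum>a\<in>UNIV. \<Sum>b\<in>UNIV. \<Sum>i\<in>UNIV. M $ (a, k) $ (b, l) * (cnj (L $ a $ i) * cnj (R $ i $ b)))"
    for k l
    by (rule sum_reverse3)
  also have "\<dots> k l = contract_fst M (cmat A) $ k $ l" for k l
    by (simp add: contract_fst_def cmat_entry_eq_cnj_product[OF assms] sum_distrib_left)
  finally show ?thesis
    by (simp add: vec_eq_iff)
qed

theorem lemma3p2:
  fixes F :: "real ^ ('n::finite \<times> 'm::finite) ^ ('n \<times> 'm) \<Rightarrow> real"
    and A :: "real ^ 'n ^ 'n" and B :: "real ^ 'm ^ 'm"
  assumes "A \<noteq> 0" and "B \<noteq> 0"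
    and "F differentiable (at (kron A B))"
  shows "(\<lambda>A1. F (kron A1 B)) differentiable (at A)
    \<and> (\<forall>BL BR :: complex ^ 'm ^ 'm. cmat B = BL ** BR \<longrightarrow>
         cmat (grad (\<lambda>A1. F (kron A1 B)) A) =
         drop_unit2 (\<Sum>j\<in>UNIV.
            kron (mat 1 :: complex ^ 'n ^ 'n)
                 ((rowvector (axis j 1) :: complex ^ 'm ^ 1) ** cnj_transpose BL)
            ** cmat (grad F (kron A B))
            ** kron (mat 1 :: complex ^ 'n ^ 'n)
                 (cnj_transpose BR ** (columnvector (axis j 1) :: complex ^ 1 ^ 'm))))
    \<and> (\<lambda>B1. F (kron A B1)) differentiable (at B)
    \<and> (\<forall>AL AR :: complex ^ 'n ^ 'n. cmat A = AL ** AR \<longrightarrow>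
         cmat (grad (\<lambda>B1. F (kron A B1)) B) =
         drop_unit1 (\<Sum>i\<in>UNIV.
            kron ((rowvector (axis i 1) :: complex ^ 'n ^ 1) ** cnj_transpose AL)
                 (mat 1 :: complex ^ 'm ^ 'm)
            ** cmat (grad F (kron A B))
            ** kron (cnj_transpose AR ** (columnvector (axis i 1) :: complex ^ 1 ^ 'n))
                 (mat 1 :: complex ^ 'm ^ 'm)))"
proof -
  let ?g = "grad F (kron A B)"
  have G: "(\<lambda>A1. F (kron A1 B)) differentiable (at A)
      \<and> grad (\<lambda>A1. F (kron A1 B)) A = contract_snd ?g B"
    by (rule grad_comp_linear[OF linear_kron_left assms(3) inner_kron_left])
  have H: "(\<lambda>B1. F (kron A B1)) differentiable (at B)
      \<and> grad (\<lambda>B1. F (kron A B1)) B = contract_fst ?g A"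
    by (rule grad_comp_linear[OF linear_kron_right assms(3) inner_kron_right])
  show ?thesis
    using G H by (simp add: cmat_contract_snd cmat_contract_fst
        drop_unit2_sum_kron_selectors drop_unit1_sum_kron_selectors)
qed

end
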